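(* (i) If $(A,W)$ is a Pratt comonoid, then so is $(A,W^\neg)$, where $W^\neg=\{A-w\mid w\in W\}$; and if $(A,W)$ is $T_1$, so is $(A,W^\neg)$. (ii) If $\{(A,W_i)\mid i\in I\}$ is a (finite or infinite) set of Pratt comonoids with the same base-set $A$, then $(A,\bigcap_{i\in I}W_i)$ is a Pratt comonoid. (iii) If $f:A\to A'$ is a map of sets and $(A,W)$ is a Pratt comonoid, and $W'=\{w\subseteq A'\mid f^{-1}(w)\in W\}$, then $(A',W')$ is a Pratt comonoid. (iv) If $(A,W)$ is a Pratt comonoid and $u\subseteq v$ are elements of $W$, then $(A_{u,v},W_{u,v})$ is a Pratt comonoid, where $A_{u,v}=v-u$ and $W_{u,v}=\{x-u\mid x\in W,\ u\subseteq x\subseteq v\}$.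
   Context: A Pratt comonoid is a pair $(A,W)$ where $A$ is a set and $W$ is a set of subsets of $A$ such that (i) $\emptyset\in W$ and $A\in W$; (ii) whenever $C\subseteq A\times A$ is such that for every $a\in A$ both the $a$-th row $\{b\mid (a,b)\in C\}$ and the $a$-th column $\{b\mid (b,a)\in C\}$ belong to $W$ (a crossword over $W$), the diagonal $\{b\mid (b,b)\in C\}$ also belongs to $W$. $A$ is called the base-set. $(A,W)$ is $T_1$ if for all distinct $a,b\in A$ some member of $W$ contains $a$ but not $b$. *)

theory Defs
  imports Main
begin

definition crossword :: "'a set \<Rightarrow> 'a set set \<Rightarrow> ('a \<times> 'a) set \<Rightarrow> bool" where
  "crossword A W C \<longleftrightarrow> C \<subseteq> A \<times> A \<and>
     (\<forall>a\<in>A. {b. (a, b) \<in> C} \<in> W \<and> {b. (b, a) \<in> C} \<in> W)"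

definition pratt_comonoid :: "'a set \<Rightarrow> 'a set set \<Rightarrow> bool" where
  "pratt_comonoid A W \<longleftrightarrow> W \<subseteq> Pow A \<and> {} \<in> W \<and> A \<in> W \<and>
     (\<forall>C. crossword A W C \<longrightarrow> {b. (b, b) \<in> C} \<in> W)"

definition T1 :: "'a set \<Rightarrow> 'a set set \<Rightarrow> bool" where
  "T1 A W \<longleftrightarrow> (\<forall>a\<in>A. \<forall>b\<in>A. a \<noteq> b \<longrightarrow> (\<exists>w\<in>W. a \<in> w \<and> b \<notin> w))"

end

theory Submission
  imports Defs
begin

text \<open>Each construction is checked by turning a crossword over the new family into a crossword
  over the old one whose diagonal determines the diagonal of the given crossword: complement the
  crossword for \<open>W\<^sup>\<not>\<close>, pull it back along \<open>f \<times> f\<close> for images, and pad it with the full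
  rows and columns indexed by \<open>u\<close> for intervals.\<close>

lemma pratt_comonoidI:
  assumes "W \<subseteq> Pow A" "{} \<in> W" "A \<in> W"
    and "\<And>C. crossword A W C \<Longrightarrow> {b. (b, b) \<in> C} \<in> W"
  shows "pratt_comonoid A W"
  using assms unfolding pratt_comonoid_def by blast

lemma pratt_comonoidD:
  assumes "pratt_comonoid A W"
  shows pratt_comonoid_subset_Pow: "W \<subseteq> Pow A"
    and pratt_comonoid_empty: "{} \<in> W"
    and pratt_comonoid_base: "A \<in> W"
    and pratt_comonoid_diagonal: "\<And>C. crossword A W C \<Longrightarrow> {b. (b, b) \<in> C} \<in> W"
  using assms unfolding pratt_comonoid_def by blast+

lemma crossword_subset: "crossword A W C \<Longrightarrow> C \<subseteq> A \<times> A"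
  unfolding crossword_def by blast

lemma crossword_row_col:
  "crossword A W C \<Longrightarrow> a \<in> A \<Longrightarrow> {b. (a, b) \<in> C} \<in> W \<and> {b. (b, a) \<in> C} \<in> W"
  unfolding crossword_def by blast

lemma crosswordI:
  assumes "C \<subseteq> A \<times> A"
    and "\<And>a. a \<in> A \<Longrightarrow> {b. (a, b) \<in> C} \<in> W \<and> {b. (b, a) \<in> C} \<in> W"
  shows "crossword A W C"
  using assms unfolding crossword_def by blast

lemma crossword_mono: "crossword A W C \<Longrightarrow> W \<subseteq> W' \<Longrightarrow> crossword A W' C"
  unfolding crossword_def by blast

lemma mem_complements_iff:
  assumes "W \<subseteq> Pow A"
  shows "s \<in> (\<lambda>w. A - w) ` W \<longleftrightarrow> s \<subseteq> A \<and> A - s \<in> W"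
proof
  assume "s \<in> (\<lambda>w. A - w) ` W"
  then obtain w where "w \<in> W" "s = A - w" by blast
  moreover have "w \<subseteq> A" using assms \<open>w \<in> W\<close> by blast
  ultimately show "s \<subseteq> A \<and> A - s \<in> W" by (simp add: double_diff)
next
  assume "s \<subseteq> A \<and> A - s \<in> W"
  then show "s \<in> (\<lambda>w. A - w) ` W" by (intro image_eqI[of _ _ "A - s"]) (auto simp: double_diff)
qed

lemma crossword_complement:
  assumes "W \<subseteq> Pow A" and "crossword A ((\<lambda>w. A - w) ` W) C"
  shows "crossword A W (A \<times> A - C)"
proof (rule crosswordI)
  fix a assume "a \<in> A"
  then have "{b. (a, b) \<in> A \<times> A - C} = A - {b. (a, b) \<in> C}"
    and "{b. (b, a) \<in> A \<times> A - C} = A - {b. (b, a) \<in> C}" by auto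
  then show "{b. (a, b) \<in> A \<times> A - C} \<in> W \<and> {b. (b, a) \<in> A \<times> A - C} \<in> W"
    using crossword_row_col[OF assms(2) \<open>a \<in> A\<close>] mem_complements_iff[OF assms(1)] by simp
qed blast

lemma pratt_comonoid_complements:
  assumes "pratt_comonoid A W"
  shows "pratt_comonoid A ((\<lambda>w. A - w) ` W)"
proof (rule pratt_comonoidI)
  note W_Pow = pratt_comonoid_subset_Pow[OF assms]
  show "{} \<in> (\<lambda>w. A - w) ` W" and "A \<in> (\<lambda>w. A - w) ` W"
    using pratt_comonoid_empty[OF assms] pratt_comonoid_base[OF assms]
    by (auto simp: mem_complements_iff[OF W_Pow])
  fix C assume C: "crossword A ((\<lambda>w. A - w) ` W) C"
  have "{b. (b, b) \<in> A \<times> A - C} \<in> W"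
    by (rule pratt_comonoid_diagonal[OF assms crossword_complement[OF W_Pow C]])
  moreover have "A - {b. (b, b) \<in> A \<times> A - C} = {b. (b, b) \<in> C}"
    using crossword_subset[OF C] by blast
  ultimately show "{b. (b, b) \<in> C} \<in> (\<lambda>w. A - w) ` W"
    by (intro image_eqI[of _ _ "{b. (b, b) \<in> A \<times> A - C}"]) auto
qed auto

lemma T1_complements: "T1 A W \<Longrightarrow> T1 A ((\<lambda>w. A - w) ` W)"
  unfolding T1_def by (metis Diff_iff image_eqI)

lemma pratt_comonoid_INT:
  assumes "\<And>i. i \<in> I \<Longrightarrow> pratt_comonoid A (W i)"
  shows "pratt_comonoid A (Pow A \<inter> (\<Inter>i\<in>I. W i))"
proof (rule pratt_comonoidI)
  fix C assume C: "crossword A (Pow A \<inter> (\<Inter>i\<in>I. W i)) C"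
  have "{b. (b, b) \<in> C} \<in> W i" if "i \<in> I" for i
    using C that by (blast intro: pratt_comonoid_diagonal[OF assms] crossword_mono)
  moreover have "{b. (b, b) \<in> C} \<subseteq> A" using crossword_subset[OF C] by blast
  ultimately show "{b. (b, b) \<in> C} \<in> Pow A \<inter> (\<Inter>i\<in>I. W i)" by blast
qed (use assms pratt_comonoid_empty pratt_comonoid_base in blast)+

lemma crossword_vimage:
  assumes "f ` A \<subseteq> A'" and "crossword A' {w. w \<subseteq> A' \<and> A \<inter> f -` w \<in> W} C"
  shows "crossword A W {(a, b) \<in> A \<times> A. (f a, f b) \<in> C}"
proof (rule crosswordI)
  fix a assume "a \<in> A"
  then have "f a \<in> A'" using assms(1) by blast
  moreover have "{b. (a, b) \<in> {(a, b) \<in> A \<times> A. (f a, f b) \<in> C}} = A \<inter> f -` {b. (f a, b) \<in> C}"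
    and "{b. (b, a) \<in> {(a, b) \<in> A \<times> A. (f a, f b) \<in> C}} = A \<inter> f -` {b. (b, f a) \<in> C}"
    using \<open>a \<in> A\<close> by auto
  ultimately show "{b. (a, b) \<in> {(a, b) \<in> A \<times> A. (f a, f b) \<in> C}} \<in> W \<and>
      {b. (b, a) \<in> {(a, b) \<in> A \<times> A. (f a, f b) \<in> C}} \<in> W"
    using crossword_row_col[OF assms(2)] by simp
qed blast

lemma pratt_comonoid_image:
  assumes "f ` A \<subseteq> A'" and "pratt_comonoid A W"
  shows "pratt_comonoid A' {w. w \<subseteq> A' \<and> A \<inter> f -` w \<in> W}"
proof (rule pratt_comonoidI)
  show "{} \<in> {w. w \<subseteq> A' \<and> A \<inter> f -` w \<in> W}"
    using pratt_comonoid_empty[OF assms(2)] by simp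
  have "A \<inter> f -` A' = A" using assms(1) by blast
  then show "A' \<in> {w. w \<subseteq> A' \<and> A \<inter> f -` w \<in> W}"
    using pratt_comonoid_base[OF assms(2)] by simp
  fix C assume C: "crossword A' {w. w \<subseteq> A' \<and> A \<inter> f -` w \<in> W} C"
  have "{b. (b, b) \<in> {(a, b) \<in> A \<times> A. (f a, f b) \<in> C}} \<in> W"
    by (rule pratt_comonoid_diagonal[OF assms(2) crossword_vimage[OF assms(1) C]])
  moreover have "{b. (b, b) \<in> {(a, b) \<in> A \<times> A. (f a, f b) \<in> C}} = A \<inter> f -` {b. (b, b) \<in> C}"
    by auto
  moreover have "{b. (b, b) \<in> C} \<subseteq> A'" using crossword_subset[OF C] by blast
  ultimately show "{b. (b, b) \<in> C} \<in> {w. w \<subseteq> A' \<and> A \<inter> f -` w \<in> W}" by simp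
qed blast

lemma mem_interval_iff:
  assumes "u \<subseteq> v"
  shows "s \<in> {x - u | x. x \<in> W \<and> u \<subseteq> x \<and> x \<subseteq> v} \<longleftrightarrow> s \<subseteq> v - u \<and> s \<union> u \<in> W"
proof
  assume "s \<in> {x - u | x. x \<in> W \<and> u \<subseteq> x \<and> x \<subseteq> v}"
  then obtain x where x: "s = x - u" "x \<in> W" "u \<subseteq> x" "x \<subseteq> v" by blast
  then have "s \<union> u = x" by blast
  then show "s \<subseteq> v - u \<and> s \<union> u \<in> W" using x(1,2,4) by auto
next
  assume s: "s \<subseteq> v - u \<and> s \<union> u \<in> W"
  then have "s = (s \<union> u) - u" "u \<subseteq> s \<union> u" "s \<union> u \<subseteq> v" using assms by blast+
  with s show "s \<in> {x - u | x. x \<in> W \<and> u \<subseteq> x \<and> x \<subseteq> v}" by auto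
qed

lemma crossword_interval:
  assumes W: "pratt_comonoid A W" and "u \<in> W" "v \<in> W" "u \<subseteq> v"
    and C: "crossword (v - u) {x - u | x. x \<in> W \<and> u \<subseteq> x \<and> x \<subseteq> v} C"
  shows "crossword A W (C \<union> A \<times> u \<union> u \<times> A)"
proof (rule crosswordI)
  have "v \<subseteq> A" using pratt_comonoid_subset_Pow[OF W] \<open>v \<in> W\<close> by blast
  note C_sub = crossword_subset[OF C]
  show "C \<union> A \<times> u \<union> u \<times> A \<subseteq> A \<times> A" using C_sub \<open>v \<subseteq> A\<close> \<open>u \<subseteq> v\<close> by blast
  fix a assume "a \<in> A"
  consider "a \<in> v - u" | "a \<in> u" | "a \<notin> v" using \<open>u \<subseteq> v\<close> by blast
  then show "{b. (a, b) \<in> C \<union> A \<times> u \<union> u \<times> A} \<in> W \<and> {b. (b, a) \<in> C \<union> A \<times> u \<union> u \<times> A} \<in> W"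
  proof cases
    case 1
    have "{b. (a, b) \<in> C \<union> A \<times> u \<union> u \<times> A} = {b. (a, b) \<in> C} \<union> u"
      and "{b. (b, a) \<in> C \<union> A \<times> u \<union> u \<times> A} = {b. (b, a) \<in> C} \<union> u"
      using \<open>a \<in> A\<close> 1 by auto
    then show ?thesis
      using crossword_row_col[OF C 1] mem_interval_iff[OF \<open>u \<subseteq> v\<close>] by simp
  next
    case 2
    have "{b. (a, b) \<in> C \<union> A \<times> u \<union> u \<times> A} = A" "{b. (b, a) \<in> C \<union> A \<times> u \<union> u \<times> A} = A"
      using \<open>a \<in> A\<close> 2 C_sub \<open>v \<subseteq> A\<close> \<open>u \<subseteq> v\<close> by auto
    then show ?thesis using pratt_comonoid_base[OF W] by simp
  next
    case 3
    have "{b. (a, b) \<in> C \<union> A \<times> u \<union> u \<times> A} = u" "{b. (b, a) \<in> C \<union> A \<times> u \<union> u \<times> A} = u"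
      using \<open>a \<in> A\<close> 3 C_sub \<open>u \<subseteq> v\<close> by auto
    then show ?thesis using \<open>u \<in> W\<close> by simp
  qed
qed

lemma pratt_comonoid_interval:
  assumes W: "pratt_comonoid A W" and "u \<in> W" "v \<in> W" "u \<subseteq> v"
  shows "pratt_comonoid (v - u) {x - u | x. x \<in> W \<and> u \<subseteq> x \<and> x \<subseteq> v}"
proof (rule pratt_comonoidI)
  note mem_iff = mem_interval_iff[OF \<open>u \<subseteq> v\<close>]
  show "{x - u | x. x \<in> W \<and> u \<subseteq> x \<and> x \<subseteq> v} \<subseteq> Pow (v - u)"
    unfolding mem_iff by blast
  show "{} \<in> {x - u | x. x \<in> W \<and> u \<subseteq> x \<and> x \<subseteq> v}"
    unfolding mem_iff using \<open>u \<in> W\<close> by simp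
  have "v - u \<union> u = v" using \<open>u \<subseteq> v\<close> by blast
  then show "v - u \<in> {x - u | x. x \<in> W \<and> u \<subseteq> x \<and> x \<subseteq> v}"
    unfolding mem_iff using \<open>v \<in> W\<close> by simp
  have "u \<subseteq> A" using pratt_comonoid_subset_Pow[OF W] \<open>u \<in> W\<close> by blast
  fix C assume C: "crossword (v - u) {x - u | x. x \<in> W \<and> u \<subseteq> x \<and> x \<subseteq> v} C"
  have "{b. (b, b) \<in> C \<union> A \<times> u \<union> u \<times> A} \<in> W"
    by (rule pratt_comonoid_diagonal[OF W crossword_interval[OF assms C]])
  moreover have "{b. (b, b) \<in> C \<union> A \<times> u \<union> u \<times> A} = {b. (b, b) \<in> C} \<union> u"
    using \<open>u \<subseteq> A\<close> by auto
  moreover have "{b. (b, b) \<in> C} \<subseteq> v - u" using crossword_subset[OF C] by blast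
  ultimately show "{b. (b, b) \<in> C} \<in> {x - u | x. x \<in> W \<and> u \<subseteq> x \<and> x \<subseteq> v}"
    unfolding mem_iff by simp
qed

theorem lemma2p2:
  shows
  "(\<forall>(A :: 'a set) W. pratt_comonoid A W \<longrightarrow>
       pratt_comonoid A ((\<lambda>w. A - w) ` W) \<and>
       (T1 A W \<longrightarrow> T1 A ((\<lambda>w. A - w) ` W)))
   \<and> (\<forall>(A :: 'a set) (I :: 'i set) (W :: 'i \<Rightarrow> 'a set set).
       (\<forall>i\<in>I. pratt_comonoid A (W i)) \<longrightarrow>
       pratt_comonoid A (Pow A \<inter> (\<Inter>i\<in>I. W i)))
   \<and> (\<forall>(A :: 'a set) (A' :: 'b set) (f :: 'a \<Rightarrow> 'b) W.
       f ` A \<subseteq> A' \<longrightarrow> pratt_comonoid A W \<longrightarrow>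
       pratt_comonoid A' {w. w \<subseteq> A' \<and> (A \<inter> f -` w) \<in> W})
   \<and> (\<forall>(A :: 'a set) W u v. pratt_comonoid A W \<longrightarrow> u \<in> W \<longrightarrow> v \<in> W \<longrightarrow> u \<subseteq> v \<longrightarrow>
       pratt_comonoid (v - u) {x - u | x. x \<in> W \<and> u \<subseteq> x \<and> x \<subseteq> v})"
  by (intro conjI allI impI pratt_comonoid_complements T1_complements pratt_comonoid_INT
      pratt_comonoid_image pratt_comonoid_interval) (simp_all only: ball_simps)

end
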